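(* Let $\Lambda$ be a countable index set and let $\{y_\lambda\}_{\lambda\in\Lambda}\subseteq\mathbb R^n$ satisfy: (a) for every compact $K\subseteq\mathbb R^n$ there is $C_K>0$ with $\sup_{x\in\mathbb R^n}|\{\lambda\in\Lambda: x\in y_\lambda+K\}|\le C_K$; (b) there is a bounded open neighbourhood $U$ of the origin with $\mathbb R^n=\bigcup_{\lambda\in\Lambda}(y_\lambda+U)$. Then for every $h>0$ and $\varepsilon>0$ there is $R>0$ such that $$\sup_{\mu\in\Lambda}\sum_{\{\lambda\in\Lambda:\,|y_\lambda-y_\mu|>R\}}e^{-A(h|y_\lambda-y_\mu|)}\le\varepsilon.$$
   Context: $\{A_p\}_{p\in\mathbb N}$ is a sequence of positive numbers with $A_0=A_1=1$ satisfying (M.1) $A_p^2\le A_{p-1}A_{p+1}$ ($p\ge1$), (M.2) $A_{p+q}\le c_0H^{p+q}A_pA_q$ for some $c_0,H\ge1$, (M.6) $p!\le c_0L_0^pA_p$ for some $c_0,L_0\ge1$, and (M.2)$^*$: $2m_p\le m_{pN}$ for $p\ge p_0$, some $p_0,N\in\mathbb Z_+$, where $m_j=A_j/A_{j-1}$. Its associated function is $A(\rho)=\sup_{p\in\mathbb N}\ln(\rho^p/A_p)$, $\rho\ge0$. *)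

theory Defs
  imports "HOL-Analysis.Analysis"
begin

text \<open>Quotient sequence m_j = A_j / A_{j-1} (used for j \<ge> 1).\<close>
definition quot_seq :: "(nat \<Rightarrow> real) \<Rightarrow> nat \<Rightarrow> real" where
  "quot_seq A j = A j / A (j - 1)"

text \<open>Standing assumptions on the weight sequence: positivity, A_0 = A_1 = 1,
 (M.1), (M.2), (M.6) and (M.2)*.\<close>
definition weight_seq :: "(nat \<Rightarrow> real) \<Rightarrow> bool" where
  "weight_seq A \<longleftrightarrow>
     (\<forall>p. A p > 0) \<and> A 0 = 1 \<and> A 1 = 1 \<and>
     (\<forall>p\<ge>1. (A p)\<^sup>2 \<le> A (p - 1) * A (p + 1)) \<and>
     (\<exists>c0 H. c0 \<ge> 1 \<and> H \<ge> 1 \<and> (\<forall>p q. A (p + q) \<le> c0 * H ^ (p + q) * A p * A q)) \<and>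
     (\<exists>c0 L0. c0 \<ge> 1 \<and> L0 \<ge> 1 \<and> (\<forall>p. fact p \<le> c0 * L0 ^ p * A p)) \<and>
     (\<exists>p0 N::nat. p0 \<ge> 1 \<and> N \<ge> 1 \<and>
        (\<forall>p\<ge>p0. 2 * quot_seq A p \<le> quot_seq A (p * N)))"

text \<open>Associated function A(\<rho>) = sup_p ln(\<rho>^p / A_p), \<rho> \<ge> 0.
 The p = 0 term equals ln 1 = 0, so the supremum is \<ge> 0; for \<rho> = 0 it is 0.\<close>
definition assoc_fun :: "(nat \<Rightarrow> real) \<Rightarrow> real \<Rightarrow> real" where
  "assoc_fun A \<rho> = (if \<rho> = 0 then 0 else (SUP p. ln (\<rho> ^ p / A p)))"

end

theory Submission
  imports Defs
begin

text \<open>By (M.6) the associated function satisfies exp(-A(\<rho>)) \<le> A_p / \<rho>^p for every p.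
  Condition (a) for the unit cube, iterated through the splitting of a cube of side 2r into
  2^n cubes of side r, puts at most C 2^(n(k+1)) of the points y_\<lambda> into the dyadic shell
  2^k < |y_\<lambda> - y_\<mu>| \<le> 2^(k+1). With p = n + 1 each shell therefore contributes O(2^(-k)),
  so the tail beyond R = 2^a is O(2^(-a)) uniformly in \<mu>.\<close>

lemma power_div_fact_le_exp:
  fixes x :: real
  assumes "x \<ge> 0"
  shows "x ^ p / fact p \<le> exp x"
proof -
  have "(\<Sum>n\<in>{p}. x ^ n /\<^sub>R fact n) \<le> (\<Sum>n. x ^ n /\<^sub>R fact n)"
    by (rule sum_le_suminf[OF summable_exp_generic]) (use assms in auto)
  then show ?thesis by (simp add: exp_def divide_inverse mult.commute)
qed

lemma bdd_above_ln_power_div: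
  fixes A :: "nat \<Rightarrow> real"
  assumes pos: "\<And>q. A q > 0" and M6: "\<And>q. fact q \<le> c * L ^ q * A q"
    and "c > 0" "L \<ge> 0" "\<rho> > 0"
  shows "bdd_above (range (\<lambda>q. ln (\<rho> ^ q / A q)))"
proof (rule bdd_aboveI2)
  fix q
  have "\<rho> ^ q / A q \<le> c * ((L * \<rho>) ^ q / fact q)"
    using mult_left_mono[OF M6[of q], of "\<rho> ^ q"] pos[of q] \<open>\<rho> > 0\<close>
    by (simp add: field_simps)
  also have "\<dots> \<le> c * exp (L * \<rho>)"
    using power_div_fact_le_exp[of "L * \<rho>" q] assms(3-5) by (intro mult_left_mono) auto
  finally show "ln (\<rho> ^ q / A q) \<le> ln (c * exp (L * \<rho>))"
    using pos[of q] assms(3,5) by (subst ln_le_cancel_iff) auto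
qed

lemma exp_neg_assoc_fun_le:
  assumes "weight_seq A" and "\<rho> > 0"
  shows "exp (- assoc_fun A \<rho>) \<le> A p / \<rho> ^ p"
proof -
  have pos: "\<And>q. A q > 0" using assms(1) by (auto simp: weight_seq_def)
  obtain c L where "c \<ge> 1" "L \<ge> 1" and M6: "\<And>q. fact q \<le> c * L ^ q * A q"
    using assms(1) unfolding weight_seq_def by blast
  then have "bdd_above (range (\<lambda>q. ln (\<rho> ^ q / A q)))"
    using bdd_above_ln_power_div[OF pos M6] assms(2) by simp
  then have "ln (\<rho> ^ p / A p) \<le> (SUP q. ln (\<rho> ^ q / A q))"
    by (rule cSUP_upper[OF UNIV_I])
  then have "- assoc_fun A \<rho> \<le> ln (A p / \<rho> ^ p)"
    using pos[of p] assms(2) by (simp add: assoc_fun_def ln_div)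
  then show ?thesis
    using pos[of p] assms(2) by (metis exp_le_cancel_iff exp_ln divide_pos_pos zero_less_power)
qed

definition cube_points :: "'i set \<Rightarrow> ('i \<Rightarrow> real^'n) \<Rightarrow> real^'n \<Rightarrow> real \<Rightarrow> 'i set" where
  "cube_points L y x r = {l\<in>L. \<forall>i. \<bar>y l $ i - x $ i\<bar> \<le> r}"

lemma translates_containing_eq_cube_points:
  fixes y :: "'i \<Rightarrow> real^'n"
  shows "{l\<in>L. x \<in> (\<lambda>k. y l + k) ` cbox (\<chi> i. - r) (\<chi> i. r)} = cube_points L y x r"
proof -
  have "x \<in> (\<lambda>k. y l + k) ` S \<longleftrightarrow> x - y l \<in> S" for l and S :: "(real^'n) set"
    by (auto simp: image_iff algebra_simps intro: bexI[where x="x - y l"])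
  moreover have "z \<in> cbox (\<chi> i. - r) (\<chi> i. r) \<longleftrightarrow> (\<forall>i. \<bar>z $ i\<bar> \<le> r)" for z :: "real^'n"
    by (simp add: mem_box_cart abs_le_iff minus_le_iff conj_commute)
  ultimately show ?thesis
    unfolding cube_points_def by (simp add: abs_minus_commute)
qed

lemma cube_points_double:
  fixes y :: "'i \<Rightarrow> real^'n"
  assumes "r \<ge> 0"
    and bound: "\<And>x. finite (cube_points L y x r) \<and> real (card (cube_points L y x r)) \<le> B"
  shows "finite (cube_points L y x (2 * r))
    \<and> real (card (cube_points L y x (2 * r))) \<le> 2 ^ CARD('n) * B"
proof -
  define S :: "(real^'n) set" where "S = vec_lambda ` (UNIV \<rightarrow>\<^sub>E {-1, 1})"
  have "finite S" unfolding S_def by (intro finite_imageI finite_PiE) auto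
  have "card S \<le> card (UNIV \<rightarrow>\<^sub>E {-1, 1::real} :: ('n \<Rightarrow> real) set)"
    unfolding S_def by (rule card_image_le) (intro finite_PiE; auto)
  also have "\<dots> = 2 ^ CARD('n)" by (simp add: card_PiE numeral_2_eq_2)
  finally have card_S: "card S \<le> 2 ^ CARD('n)" .
  have cover: "cube_points L y x (2 * r) \<subseteq> (\<Union>s\<in>S. cube_points L y (x + r *\<^sub>R s) r)"
  proof
    fix l assume l: "l \<in> cube_points L y x (2 * r)"
    define s :: "real^'n" where "s = (\<chi> i. if y l $ i \<ge> x $ i then 1 else -1)"
    have "s \<in> S" unfolding S_def s_def
      by (rule image_eqI[where x="\<lambda>i. if y l $ i \<ge> x $ i then 1 else -1"]) (auto split: if_splits)
    moreover have "l \<in> cube_points L y (x + r *\<^sub>R s) r"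
      using l \<open>r \<ge> 0\<close> unfolding cube_points_def s_def by (auto simp: abs_le_iff)
    ultimately show "l \<in> (\<Union>s\<in>S. cube_points L y (x + r *\<^sub>R s) r)" by blast
  qed
  have "finite (\<Union>s\<in>S. cube_points L y (x + r *\<^sub>R s) r)" using \<open>finite S\<close> bound by auto
  then have "card (cube_points L y x (2 * r)) \<le> card (\<Union>s\<in>S. cube_points L y (x + r *\<^sub>R s) r)"
    using cover by (rule card_mono)
  also have "\<dots> \<le> (\<Sum>s\<in>S. card (cube_points L y (x + r *\<^sub>R s) r))"
    by (rule card_UN_le[OF \<open>finite S\<close>])
  finally have "real (card (cube_points L y x (2 * r)))
      \<le> (\<Sum>s\<in>S. real (card (cube_points L y (x + r *\<^sub>R s) r)))"
    by (simp flip: of_nat_sum)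
  also have "\<dots> \<le> card S * B"
    using sum_bounded_above[of S "\<lambda>s. real (card (cube_points L y (x + r *\<^sub>R s) r))" B] bound by auto
  also have "\<dots> \<le> 2 ^ CARD('n) * B"
    using card_S bound[of x] by (intro mult_right_mono) (auto simp flip: of_nat_le_iff)
  finally show ?thesis
    using finite_subset[OF cover] \<open>finite (\<Union>s\<in>S. _)\<close> by blast
qed

lemma cube_points_dyadic:
  fixes y :: "'i \<Rightarrow> real^'n"
  assumes "\<And>x. finite (cube_points L y x 1) \<and> real (card (cube_points L y x 1)) \<le> B"
  shows "finite (cube_points L y x (2 ^ k))
    \<and> real (card (cube_points L y x (2 ^ k))) \<le> (2 ^ CARD('n)) ^ k * B"
proof (induction k arbitrary: x)
  case 0
  then show ?case using assms by simp
next
  case (Suc k)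
  show ?case
    using cube_points_double[of "2 ^ k" L y "(2 ^ CARD('n)) ^ k * B" x] Suc.IH
    by (simp add: mult.assoc)
qed

lemma exists_dyadic_shell:
  fixes t :: real
  assumes "2 ^ a < t"
  shows "\<exists>k\<ge>a. 2 ^ k < t \<and> t \<le> 2 ^ (k + 1)"
proof -
  obtain N where "t < 2 ^ N" using real_arch_pow[of 2 t] by auto
  then have "t \<le> 2 ^ (a + N)" using power_increasing[of N "a + N" "2::real"] by linarith
  then obtain n where "\<not> t \<le> 2 ^ (a + n)" "t \<le> 2 ^ (a + Suc n)"
    using exists_least_lemma[of "\<lambda>n. t \<le> 2 ^ (a + n)"] assms by auto
  then show ?thesis by (intro exI[of _ "a + n"]) auto
qed

lemma sum_power_half_le:
  assumes "finite K" and "K \<subseteq> {a..}"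
  shows "(\<Sum>k\<in>K. (1/2::real) ^ k) \<le> 2 * (1/2) ^ a"
proof -
  have "inj_on (\<lambda>k. k - a) K" using assms(2) by (intro inj_on_diff_nat) auto
  then have "(\<Sum>k\<in>K. (1/2::real) ^ k) = (\<Sum>i\<in>(\<lambda>k. k - a) ` K. (1/2) ^ (a + i))"
    using assms(2) by (subst sum.reindex) (auto intro!: sum.cong)
  also have "\<dots> = (1/2) ^ a * (\<Sum>i\<in>(\<lambda>k. k - a) ` K. (1/2) ^ i)"
    by (rule sum_power_add)
  also have "\<dots> \<le> (1/2) ^ a * 2"
    using geometric_sum_less[of "1/2::real" "(\<lambda>k. k - a) ` K"] assms(1)
    by (intro mult_left_mono) auto
  finally show ?thesis by simp
qed

lemma sum_le_dyadic_shells: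
  fixes g d :: "'a \<Rightarrow> real"
  assumes "finite F" and g_nonneg: "\<And>l. l \<in> F \<Longrightarrow> 0 \<le> g l"
    and far: "\<And>l. l \<in> F \<Longrightarrow> 2 ^ a < d l"
    and shell: "\<And>k. k \<ge> a \<Longrightarrow>
      sum g {l\<in>F. 2 ^ k < d l \<and> d l \<le> 2 ^ (k + 1)} \<le> M * (1/2) ^ k"
    and "M \<ge> 0"
  shows "sum g F \<le> 2 * M * (1/2) ^ a"
proof -
  define shell_index
    where "shell_index l = (SOME k. k \<ge> a \<and> 2 ^ k < d l \<and> d l \<le> 2 ^ (k + 1))" for l
  have index: "shell_index l \<ge> a \<and> 2 ^ shell_index l < d l \<and> d l \<le> 2 ^ (shell_index l + 1)"
    if "l \<in> F" for l
    unfolding shell_index_def by (rule someI_ex) (use exists_dyadic_shell far that in blast)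
  have "sum g F = (\<Sum>k\<in>shell_index ` F. sum g {l\<in>F. shell_index l = k})"
    using \<open>finite F\<close> by (intro sum.group[symmetric]) auto
  also have "\<dots> \<le> (\<Sum>k\<in>shell_index ` F. sum g {l\<in>F. 2 ^ k < d l \<and> d l \<le> 2 ^ (k + 1)})"
    using \<open>finite F\<close> g_nonneg by (intro sum_mono sum_mono2) (auto dest: index)
  also have "\<dots> \<le> (\<Sum>k\<in>shell_index ` F. M * (1/2) ^ k)"
    using index by (intro sum_mono shell) auto
  also have "\<dots> \<le> M * (2 * (1/2) ^ a)"
    using index \<open>finite F\<close> \<open>M \<ge> 0\<close>
    by (auto simp flip: sum_distrib_left intro!: mult_left_mono sum_power_half_le)
  finally show ?thesis by simp
qed

lemma sum_exp_assoc_fun_dyadic_shell_le: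
  fixes y :: "'i \<Rightarrow> real^'n"
  assumes "weight_seq A" and "h > 0" and "F \<subseteq> L"
    and unit: "\<And>x. finite (cube_points L y x 1) \<and> real (card (cube_points L y x 1)) \<le> C"
  shows "(\<Sum>l\<in>{l\<in>F. 2 ^ k < norm (y l - y m) \<and> norm (y l - y m) \<le> 2 ^ (k + 1)}.
            exp (- assoc_fun A (h * norm (y l - y m))))
         \<le> 2 ^ CARD('n) * C * A (CARD('n) + 1) / h ^ (CARD('n) + 1) * (1/2) ^ k"
proof -
  define n where "n = CARD('n)"
  define S where "S = {l\<in>F. 2 ^ k < norm (y l - y m) \<and> norm (y l - y m) \<le> 2 ^ (k + 1)}"
  have pos: "\<And>q. A q > 0" using assms(1) by (auto simp: weight_seq_def)
  have "S \<subseteq> cube_points L y (y m) (2 ^ (k + 1))"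
    using \<open>F \<subseteq> L\<close> order_trans[OF component_le_norm_cart]
    unfolding S_def cube_points_def by (fastforce simp flip: vector_minus_component)
  moreover have "finite (cube_points L y (y m) (2 ^ (k + 1)))
      \<and> real (card (cube_points L y (y m) (2 ^ (k + 1)))) \<le> (2 ^ n) ^ (k + 1) * C"
    unfolding n_def by (rule cube_points_dyadic[OF unit])
  ultimately have card_S: "real (card S) \<le> (2 ^ n) ^ (k + 1) * C"
    by (meson card_mono of_nat_le_iff order_trans)
  have term_le: "exp (- assoc_fun A (h * norm (y l - y m))) \<le> A (n + 1) / (h * 2 ^ k) ^ (n + 1)"
    if "l \<in> S" for l
  proof -
    have "0 < h * 2 ^ k" "h * 2 ^ k \<le> h * norm (y l - y m)"
      using that \<open>h > 0\<close> unfolding S_def by auto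
    have "exp (- assoc_fun A (h * norm (y l - y m)))
        \<le> A (n + 1) / (h * norm (y l - y m)) ^ (n + 1)"
      using \<open>0 < h * 2 ^ k\<close> \<open>h * 2 ^ k \<le> _\<close> by (intro exp_neg_assoc_fun_le[OF assms(1)]) linarith
    also have "\<dots> \<le> A (n + 1) / (h * 2 ^ k) ^ (n + 1)"
      using pos[of "n + 1"] \<open>0 < h * 2 ^ k\<close> \<open>h * 2 ^ k \<le> _\<close>
      by (intro frac_le power_mono zero_less_power) auto
    finally show ?thesis .
  qed
  have "(\<Sum>l\<in>S. exp (- assoc_fun A (h * norm (y l - y m))))
      \<le> real (card S) * (A (n + 1) / (h * 2 ^ k) ^ (n + 1))"
    using sum_bounded_above[of S, OF term_le] by simp
  also have "\<dots> \<le> (2 ^ n) ^ (k + 1) * C * (A (n + 1) / (h * 2 ^ k) ^ (n + 1))"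
    using card_S by (rule mult_right_mono) (use pos[of "n + 1"] \<open>h > 0\<close> in simp)
  also have "\<dots> = 2 ^ n * C * A (n + 1) / h ^ (n + 1) * (1/2) ^ k"
    using \<open>h > 0\<close>
    by (simp add: field_simps power_add flip: power_mult)
  finally show ?thesis unfolding S_def n_def .
qed

lemma finite_tail_sum_exp_assoc_fun_le:
  fixes y :: "'i \<Rightarrow> real^'n"
  assumes "weight_seq A" and "h > 0"
    and unit: "\<And>x. finite (cube_points L y x 1) \<and> real (card (cube_points L y x 1)) \<le> C"
    and "finite F" and F: "F \<subseteq> {l\<in>L. 2 ^ a < norm (y l - y m)}"
  shows "(\<Sum>l\<in>F. exp (- assoc_fun A (h * norm (y l - y m))))
         \<le> 2 * (2 ^ CARD('n) * C * A (CARD('n) + 1) / h ^ (CARD('n) + 1)) * (1/2) ^ a"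
proof (rule sum_le_dyadic_shells[where d = "\<lambda>l. norm (y l - y m)"])
  show "sum (\<lambda>l. exp (- assoc_fun A (h * norm (y l - y m))))
          {l\<in>F. 2 ^ k < norm (y l - y m) \<and> norm (y l - y m) \<le> 2 ^ (k + 1)}
        \<le> 2 ^ CARD('n) * C * A (CARD('n) + 1) / h ^ (CARD('n) + 1) * (1/2) ^ k" for k
    using F by (intro sum_exp_assoc_fun_dyadic_shell_le[OF assms(1,2) _ unit]) auto
  have "0 \<le> C" using unit by (meson of_nat_0_le_iff order_trans)
  then show "0 \<le> 2 ^ CARD('n) * C * A (CARD('n) + 1) / h ^ (CARD('n) + 1)"
    using assms(1,2) by (simp add: weight_seq_def less_imp_le)
qed (use \<open>finite F\<close> F in auto)

theorem lemma3p16: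
  fixes A :: "nat \<Rightarrow> real"
    and \<Lambda> :: "'i set"
    and y :: "'i \<Rightarrow> real ^ 'n"
  assumes "weight_seq A"
    and "countable \<Lambda>"
    and "\<forall>K. compact K \<longrightarrow> (\<exists>C::real. C > 0 \<and>
            (\<forall>x. finite {l\<in>\<Lambda>. x \<in> (\<lambda>k. y l + k) ` K} \<and>
                 real (card {l\<in>\<Lambda>. x \<in> (\<lambda>k. y l + k) ` K}) \<le> C))"
    and "\<exists>U. open U \<and> bounded U \<and> 0 \<in> U \<and> UNIV = (\<Union>l\<in>\<Lambda>. (\<lambda>u. y l + u) ` U)"
    and "h > 0" and "\<epsilon> > 0"
  shows "\<exists>R>0. \<forall>m\<in>\<Lambda>.
           (\<lambda>l. exp (- assoc_fun A (h * norm (y l - y m))))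
              summable_on {l\<in>\<Lambda>. norm (y l - y m) > R} \<and>
           (\<Sum>\<^sub>\<infinity>l\<in>{l\<in>\<Lambda>. norm (y l - y m) > R}. exp (- assoc_fun A (h * norm (y l - y m)))) \<le> \<epsilon>"
proof -
  obtain C where "C > 0"
    and unit: "\<And>x. finite (cube_points \<Lambda> y x 1) \<and> real (card (cube_points \<Lambda> y x 1)) \<le> C"
    using assms(3)[rule_format, OF compact_cbox[of "\<chi> i. - 1" "\<chi> i. 1"]]
    unfolding translates_containing_eq_cube_points by blast
  define M where "M = 2 ^ CARD('n) * C * A (CARD('n) + 1) / h ^ (CARD('n) + 1)"
  have "M > 0" using \<open>C > 0\<close> assms(1,5) by (simp add: M_def weight_seq_def)
  then obtain a where a: "(1/2::real) ^ a < \<epsilon> / (2 * M)"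
    using real_arch_pow_inv[of "\<epsilon> / (2 * M)" "1/2"] assms(6) by auto
  show ?thesis
  proof (intro exI[of _ "2 ^ a"] conjI ballI)
    fix m
    let ?g = "\<lambda>l. exp (- assoc_fun A (h * norm (y l - y m)))"
    let ?T = "{l\<in>\<Lambda>. norm (y l - y m) > 2 ^ a}"
    have finite_sums: "sum ?g F \<le> \<epsilon>" if "finite F" "F \<subseteq> ?T" for F
    proof -
      have "sum ?g F \<le> 2 * M * (1/2) ^ a"
        unfolding M_def using that
        by (intro finite_tail_sum_exp_assoc_fun_le[OF assms(1,5) unit]) auto
      also have "\<dots> \<le> \<epsilon>" using a \<open>M > 0\<close> by (simp add: field_simps)
      finally show ?thesis .
    qed
    show "?g summable_on ?T"
      using finite_sums by (intro nonneg_bdd_above_summable_on bdd_aboveI) auto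
    then show "infsum ?g ?T \<le> \<epsilon>"
      using finite_sums by (rule infsum_le_finite_sums)
  qed simp
qed

end
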